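(* Let $\kappa\ge3$, $h>0$, $f_{\mathrm{hard}}$ and $S_i^x$ be as defined below. There is $d_0$ (absolute) such that for all $d\ge d_0$ and every fixed $x\in\mathbb{R}^d$, with probability at least $1-d^{-5}$ over $g\sim\mathcal N(0,I_d)$, $$\sum_{i=1}^dS_i^x-\mathbb{E}_g\Big[\sum_{i=1}^dS_i^x\Big]\le 10\,h\kappa\sqrt{d\log d}.$$
   Context: $f_{\mathrm{hard}}(x)=\sum_{i=1}^d f_i(x_i)$ with $f_1(c)=\frac12c^2$ and $f_i(c)=\frac\kappa3c^2-\frac{\kappa h}3\cos\frac c{\sqrt h}$ for $2\le i\le d$. For $g\in\mathbb{R}^d$, $x_g=x+\sqrt{2h}\,g$ and $S_i^x=-f_i([x_g]_i)+f_i(x_i)-\frac12(x_i-[x_g]_i)(f_i'(x_i)+f_i'([x_g]_i))$. *)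

theory Defs
  imports "HOL-Probability.Probability"
begin

definition f_coord :: "real \<Rightarrow> real \<Rightarrow> nat \<Rightarrow> real \<Rightarrow> real" where
  "f_coord \<kappa> h i c =
     (if i = 1 then c\<^sup>2 / 2
      else \<kappa> / 3 * c\<^sup>2 - \<kappa> * h / 3 * cos (c / sqrt h))"

definition f_hard :: "real \<Rightarrow> real \<Rightarrow> nat \<Rightarrow> (nat \<Rightarrow> real) \<Rightarrow> real" where
  "f_hard \<kappa> h d x = (\<Sum>i=1..d. f_coord \<kappa> h i (x i))"

definition x_g :: "real \<Rightarrow> (nat \<Rightarrow> real) \<Rightarrow> (nat \<Rightarrow> real) \<Rightarrow> (nat \<Rightarrow> real)" where
  "x_g h x g = (\<lambda>i. x i + sqrt (2 * h) * g i)"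

definition S_coord :: "real \<Rightarrow> real \<Rightarrow> nat \<Rightarrow> (nat \<Rightarrow> real) \<Rightarrow> (nat \<Rightarrow> real) \<Rightarrow> real" where
  "S_coord \<kappa> h i x g =
     (let y = x_g h x g i; f = f_coord \<kappa> h i in
      - f y + f (x i) - 1/2 * (x i - y) * (deriv f (x i) + deriv f y))"

definition gauss :: "nat \<Rightarrow> (nat \<Rightarrow> real) measure" where
  "gauss d = PiM {1..d} (\<lambda>_. density lborel std_normal_density)"

end

theory Submission
  imports Defs
begin

text \<open>
  Since the trapezoid rule is exact for quadratics, only the cosine part of \<open>f\<^sub>i\<close> contributes
  to \<open>S\<^sub>i\<^sup>x\<close>: with \<open>a = x\<^sub>i/\<surd>h\<close> and \<open>u = g\<^sub>i\<close>,
  \<open>S\<^sub>i\<^sup>x = (\<kappa>h/3) T(a,u)\<close> for \<open>i \<ge> 2\<close> and \<open>S\<^sub>1\<^sup>x = 0\<close>, where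
  \<open>T(a,u) = cos (a + \<surd>2 u) - cos a + (u/\<surd>2)(sin a + sin (a + \<surd>2 u))\<close>
  grows at most linearly in \<open>u\<close>. A function of a standard Gaussian with linear growth
  \<open>|F u| \<le> 2 + 3/2 |u|\<close> has centered moment generating function at most \<open>exp (45 \<lambda>\<^sup>2)\<close>
  for \<open>0 \<le> \<lambda> \<le> 1/20\<close>. The coordinates of \<open>g\<close> are independent, so Chernoff's bound
  with \<open>\<lambda> = \<surd>(d ln d)/(3d)\<close> shows that \<open>\<Sum> T\<close> exceeds its mean by \<open>30 \<surd>(d ln d)\<close>
  with probability at most \<open>d\<^sup>-\<^sup>5\<close>.
\<close>

lemma exp_le_one_plus_quadratic: "exp (z::real) \<le> 1 + z + z\<^sup>2 / 2 * exp \<bar>z\<bar>"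
proof -
  obtain t where t: "\<bar>t\<bar> \<le> \<bar>z\<bar>" "exp z = (\<Sum>m<2. z ^ m / fact m) + exp t / fact 2 * z ^ 2"
    using Maclaurin_exp_le[of z 2] by blast
  have "exp t / 2 * z\<^sup>2 \<le> exp \<bar>z\<bar> / 2 * z\<^sup>2"
    using t(1) by (intro mult_right_mono) auto
  thus ?thesis using t(2) by (simp add: numeral_2_eq_2 mult_ac)
qed

lemma square_le_exp_half_abs: "(y::real)\<^sup>2 \<le> 8 * exp (\<bar>y\<bar> / 2)"
proof -
  have "1 + \<bar>y\<bar>/2 + (\<bar>y\<bar>/2)\<^sup>2 / 2 \<le> exp (\<bar>y\<bar>/2)"
    by (rule exp_lower_Taylor_quadratic) simp
  moreover have "(\<bar>y\<bar>/2)\<^sup>2 = y\<^sup>2/4" by (simp add: power_divide)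
  ultimately show ?thesis by simp
qed

lemma exp_three_halves_le: "exp (3/2::real) \<le> 45/8"
proof (rule power2_le_imp_le)
  have "(exp (3/2::real))\<^sup>2 = (exp 1)^3"
    by (simp flip: exp_of_nat_mult exp_add add: power2_eq_square)
  also have "\<dots> \<le> 3^3"
    using exp_le by (intro power_mono) auto
  finally show "(exp (3/2::real))\<^sup>2 \<le> (45/8)\<^sup>2" by (simp add: power2_eq_square)
qed simp

lemma exp_linear_growth_le:
  fixes l v u :: real
  assumes v: "\<bar>v\<bar> \<le> 2 + 3/2 * \<bar>u\<bar>" and l: "0 \<le> l" "l \<le> 1/20"
  shows "exp (l * v) \<le> 1 + l * v + 4 * l\<^sup>2 * exp (11/10) * exp (33/40 * \<bar>u\<bar>)"
proof -
  have "(l * v)\<^sup>2 \<le> l\<^sup>2 * (8 * exp (\<bar>v\<bar> / 2))"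
    using square_le_exp_half_abs[of v] by (simp add: power_mult_distrib mult_left_mono)
  hence "(l * v)\<^sup>2 / 2 * exp \<bar>l * v\<bar> \<le> l\<^sup>2 * (8 * exp (\<bar>v\<bar> / 2)) / 2 * exp (l * \<bar>v\<bar>)"
    using l by (intro mult_mono divide_right_mono) (auto simp: abs_mult)
  also have "\<dots> = 4 * l\<^sup>2 * exp (\<bar>v\<bar> / 2 + l * \<bar>v\<bar>)"
    by (simp add: exp_add)
  also have "\<dots> \<le> 4 * l\<^sup>2 * exp (11/10 + 33/40 * \<bar>u\<bar>)"
  proof -
    have "\<bar>v\<bar> / 2 + l * \<bar>v\<bar> \<le> \<bar>v\<bar> / 2 + 1/20 * \<bar>v\<bar>"
      using l by (intro add_left_mono mult_right_mono) auto
    also have "\<dots> \<le> 11/10 + 33/40 * \<bar>u\<bar>" using v by simp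
    finally show ?thesis by (intro mult_left_mono) auto
  qed
  finally show ?thesis
    using exp_le_one_plus_quadratic[of "l * v"] by (simp add: exp_add mult.assoc)
qed

subsection \<open>Exponential moments of the standard Gaussian\<close>

abbreviation std_normal :: "real measure" where
  "std_normal \<equiv> density lborel std_normal_density"

lemma prob_space_std_normal: "prob_space std_normal"
  by (rule prob_space_normal_density) simp

lemma std_normal_density_mult_exp:
  "std_normal_density x * exp (c * x) = exp (c\<^sup>2/2) * normal_density c 1 x"
proof -
  have "- x\<^sup>2 / 2 + c * x = c\<^sup>2/2 + (-(x - c)\<^sup>2 / 2)" by (simp add: power2_eq_square field_simps)
  hence "exp (- x\<^sup>2 / 2) * exp (c * x) = exp (c\<^sup>2/2) * exp (-(x - c)\<^sup>2 / 2)"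
    by (metis exp_add)
  thus ?thesis by (simp add: normal_density_def std_normal_density_def)
qed

lemma integrable_std_normal_exp: "integrable std_normal (\<lambda>x. exp (c * x))"
  by (subst integrable_density)
     (auto simp: std_normal_density_mult_exp intro: integrable_normal_density)

lemma integral_std_normal_exp: "(\<integral>x. exp (c * x) \<partial>std_normal) = exp (c\<^sup>2/2)"
  by (subst integral_density) (auto simp: std_normal_density_mult_exp)

lemma exp_mult_abs_le: "exp (c * \<bar>x\<bar>) \<le> exp (c * x) + exp (- c * x)" for c x :: real
  by (auto simp: abs_real_def add_increasing add_increasing2)

lemma integrable_std_normal_exp_abs: "integrable std_normal (\<lambda>x. exp (c * \<bar>x\<bar>))"
proof (rule Bochner_Integration.integrable_bound)
  show "integrable std_normal (\<lambda>x. exp (c * x) + exp (- c * x))"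
    by (intro Bochner_Integration.integrable_add integrable_std_normal_exp)
  show "AE x in std_normal. norm (exp (c * \<bar>x\<bar>)) \<le> norm (exp (c * x) + exp (- c * x))"
    using exp_mult_abs_le by (intro AE_I2) (simp add: add_nonneg_nonneg)
qed measurable

lemma integral_std_normal_exp_abs_le: "(\<integral>x. exp (c * \<bar>x\<bar>) \<partial>std_normal) \<le> 2 * exp (c\<^sup>2/2)"
proof -
  have "(\<integral>x. exp (c * \<bar>x\<bar>) \<partial>std_normal) \<le> (\<integral>x. exp (c * x) + exp (- c * x) \<partial>std_normal)"
    by (intro integral_mono integrable_std_normal_exp_abs exp_mult_abs_le
        Bochner_Integration.integrable_add integrable_std_normal_exp)
  also have "\<dots> = 2 * exp (c\<^sup>2/2)"
    using integral_std_normal_exp[of c] integral_std_normal_exp[of "- c"]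
      integrable_std_normal_exp[of c] integrable_std_normal_exp[of "- c"]
    by (subst Bochner_Integration.integral_add) auto
  finally show ?thesis .
qed

lemma linear_growth_abs_le:
  fixes v u A B :: real
  assumes "\<bar>v\<bar> \<le> A + B * \<bar>u\<bar>"
  shows "\<bar>v\<bar> \<le> \<bar>A\<bar> + \<bar>B\<bar> * \<bar>u\<bar>"
  using assms abs_ge_self[of A] mult_right_mono[OF abs_ge_self[of B] abs_ge_zero[of u]] by linarith

lemma integrable_std_normal_linear_growth:
  fixes F :: "real \<Rightarrow> real"
  assumes [measurable]: "F \<in> borel_measurable borel" and F: "\<And>u. \<bar>F u\<bar> \<le> A + B * \<bar>u\<bar>"
  shows "integrable std_normal F"
proof (rule Bochner_Integration.integrable_bound)
  show "integrable std_normal (\<lambda>u. (\<bar>A\<bar> + \<bar>B\<bar>) * exp (1 * \<bar>u\<bar>))"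
    by (intro integrable_mult_right integrable_std_normal_exp_abs)
  have "\<bar>F u\<bar> \<le> (\<bar>A\<bar> + \<bar>B\<bar>) * exp (1 * \<bar>u\<bar>)" for u
  proof -
    have "\<bar>F u\<bar> \<le> \<bar>A\<bar> + \<bar>B\<bar> * \<bar>u\<bar>" by (rule linear_growth_abs_le[OF F[of u]])
    also have "\<dots> \<le> (\<bar>A\<bar> + \<bar>B\<bar>) * (1 + \<bar>u\<bar>)" by (simp add: algebra_simps)
    also have "\<dots> \<le> (\<bar>A\<bar> + \<bar>B\<bar>) * exp (1 * \<bar>u\<bar>)"
      by (intro mult_left_mono) (auto simp: exp_ge_add_one_self)
    finally show ?thesis .
  qed
  thus "AE u in std_normal. norm (F u) \<le> norm ((\<bar>A\<bar> + \<bar>B\<bar>) * exp (1 * \<bar>u\<bar>))"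
    by (intro AE_I2) simp
qed measurable

lemma integrable_std_normal_exp_linear_growth:
  fixes F :: "real \<Rightarrow> real"
  assumes [measurable]: "F \<in> borel_measurable borel" and F: "\<And>u. \<bar>F u\<bar> \<le> A + B * \<bar>u\<bar>"
  shows "integrable std_normal (\<lambda>u. exp (l * F u))"
proof (rule Bochner_Integration.integrable_bound)
  show "integrable std_normal (\<lambda>u. exp (\<bar>l\<bar> * \<bar>A\<bar>) * exp (\<bar>l\<bar> * \<bar>B\<bar> * \<bar>u\<bar>))"
    by (intro integrable_mult_right integrable_std_normal_exp_abs)
  have "l * F u \<le> \<bar>l\<bar> * \<bar>A\<bar> + \<bar>l\<bar> * \<bar>B\<bar> * \<bar>u\<bar>" for u
  proof -
    have "l * F u \<le> \<bar>l\<bar> * \<bar>F u\<bar>" by (metis abs_ge_self abs_mult)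
    also have "\<dots> \<le> \<bar>l\<bar> * (\<bar>A\<bar> + \<bar>B\<bar> * \<bar>u\<bar>)"
      using linear_growth_abs_le[OF F[of u]] by (intro mult_left_mono) auto
    finally show ?thesis by (simp add: algebra_simps)
  qed
  thus "AE u in std_normal. norm (exp (l * F u)) \<le> norm (exp (\<bar>l\<bar> * \<bar>A\<bar>) * exp (\<bar>l\<bar> * \<bar>B\<bar> * \<bar>u\<bar>))"
    by (intro AE_I2) (simp flip: exp_add)
qed measurable

lemma mgf_std_normal_linear_growth_le:
  fixes F :: "real \<Rightarrow> real"
  assumes [measurable]: "F \<in> borel_measurable borel" and F: "\<And>u. \<bar>F u\<bar> \<le> 2 + 3/2 * \<bar>u\<bar>"
    and l: "0 \<le> l" "l \<le> 1/20"
  shows "(\<integral>u. exp (l * F u) \<partial>std_normal) \<le> 1 + l * (\<integral>u. F u \<partial>std_normal) + 45 * l\<^sup>2"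
proof -
  interpret prob_space std_normal by (rule prob_space_std_normal)
  define K where "K = 4 * l\<^sup>2 * exp (11/10)"
  have iF: "integrable std_normal F"
    by (rule integrable_std_normal_linear_growth[OF _ F]) simp
  have iK: "integrable std_normal (\<lambda>u. K * exp (33/40 * \<bar>u\<bar>))"
    by (intro integrable_mult_right integrable_std_normal_exp_abs)
  have iE: "integrable std_normal (\<lambda>u. exp (l * F u))"
    by (rule integrable_std_normal_exp_linear_growth[OF _ F]) simp
  have "(\<integral>u. exp (l * F u) \<partial>std_normal)
      \<le> (\<integral>u. 1 + l * F u + K * exp (33/40 * \<bar>u\<bar>) \<partial>std_normal)"
    using exp_linear_growth_le[OF F l] iE iF iK
    by (intro integral_mono) (auto simp: K_def mult.assoc)
  also have "\<dots> = 1 + l * (\<integral>u. F u \<partial>std_normal) + K * (\<integral>u. exp (33/40 * \<bar>u\<bar>) \<partial>std_normal)"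
    using iF iK prob_space by simp
  also have "\<dots> \<le> 1 + l * (\<integral>u. F u \<partial>std_normal) + K * (2 * exp ((33/40)\<^sup>2/2))"
    using integral_std_normal_exp_abs_le[of "33/40"] by (intro add_left_mono mult_left_mono) (auto simp: K_def)
  also have "K * (2 * exp ((33/40)\<^sup>2/2)) = 8 * l\<^sup>2 * exp (11/10 + (33/40)\<^sup>2/2)"
    by (simp add: K_def exp_add)
  also have "\<dots> \<le> 8 * l\<^sup>2 * exp (3/2)"
    by (intro mult_left_mono) (auto simp: power2_eq_square)
  also have "\<dots> \<le> 8 * l\<^sup>2 * (45/8)"
    using exp_three_halves_le by (intro mult_left_mono) auto
  finally show ?thesis by simp
qed

lemma centered_mgf_std_normal_linear_growth_le:
  fixes F :: "real \<Rightarrow> real"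
  assumes [measurable]: "F \<in> borel_measurable borel" and F: "\<And>u. \<bar>F u\<bar> \<le> 2 + 3/2 * \<bar>u\<bar>"
    and l: "0 \<le> l" "l \<le> 1/20"
  shows "(\<integral>\<^sup>+u. exp (l * (F u - (\<integral>v. F v \<partial>std_normal))) \<partial>std_normal) \<le> exp (45 * l\<^sup>2)"
proof -
  define m where "m = (\<integral>v. F v \<partial>std_normal)"
  have eq: "exp (l * (F u - m)) = exp (- (l * m)) * exp (l * F u)" for u
    by (simp add: right_diff_distrib flip: exp_add)
  have "(\<integral>\<^sup>+u. exp (l * (F u - m)) \<partial>std_normal) = exp (- (l * m)) * (\<integral>u. exp (l * F u) \<partial>std_normal)"
  proof -
    have int: "integrable std_normal (\<lambda>u. exp (l * (F u - m)))"
      unfolding eq by (intro integrable_mult_right integrable_std_normal_exp_linear_growth[OF _ F]) simp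
    show ?thesis
      by (subst nn_integral_eq_integral[OF int]) (auto simp: eq)
  qed
  also have "\<dots> \<le> exp (- (l * m)) * exp (l * m + 45 * l\<^sup>2)"
  proof -
    have "(\<integral>u. exp (l * F u) \<partial>std_normal) \<le> 1 + (l * m + 45 * l\<^sup>2)"
      using mgf_std_normal_linear_growth_le[OF _ F l] by (simp add: m_def)
    also have "\<dots> \<le> exp (l * m + 45 * l\<^sup>2)" by (rule exp_ge_add_one_self)
    finally show ?thesis by (intro ennreal_leI mult_left_mono) auto
  qed
  also have "\<dots> = exp (45 * l\<^sup>2)" by (simp flip: exp_add)
  finally show ?thesis unfolding m_def .
qed

subsection \<open>Chernoff bound for sums over the coordinates of \<open>gauss d\<close>\<close>

lemma gauss_component:
  fixes F :: "real \<Rightarrow> real"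
  assumes [measurable]: "F \<in> borel_measurable borel" and "integrable std_normal F" and i: "i \<in> {1..d}"
  shows "integrable (gauss d) (\<lambda>g. F (g i))" "(\<integral>g. F (g i) \<partial>gauss d) = (\<integral>u. F u \<partial>std_normal)"
proof -
  have meas: "(\<lambda>g. g i) \<in> measurable (gauss d) std_normal"
    unfolding gauss_def using i by (rule measurable_component_singleton)
  have distr: "distr (gauss d) std_normal (\<lambda>g. g i) = std_normal"
    unfolding gauss_def by (rule distr_PiM_component[OF prob_space_std_normal i])
  show "integrable (gauss d) (\<lambda>g. F (g i))"
    using assms(2) by (simp add: integrable_distr_eq[OF meas, symmetric] distr)
  show "(\<integral>g. F (g i) \<partial>gauss d) = (\<integral>u. F u \<partial>std_normal)"
    using integral_distr[OF meas, of F] by (simp add: distr)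
qed

lemma gauss_sum_upper_tail_le:
  fixes F :: "nat \<Rightarrow> real \<Rightarrow> real"
  assumes [measurable]: "\<And>i. F i \<in> borel_measurable borel"
    and F: "\<And>i u. \<bar>F i u\<bar> \<le> 2 + 3/2 * \<bar>u\<bar>" and l: "0 < l" "l \<le> 1/20"
  shows "measure (gauss d) {g \<in> space (gauss d). t \<le> (\<Sum>i=1..d. F i (g i) - (\<integral>u. F i u \<partial>std_normal))}
    \<le> exp (- l * t + 45 * l\<^sup>2 * real d)"
proof -
  interpret P: product_prob_space "\<lambda>_. std_normal" "{1..d}"
    using prob_space_std_normal
    by (intro product_prob_space.intro product_sigma_finite.intro product_prob_space_axioms.intro
        prob_space_imp_sigma_finite)
  interpret prob_space "gauss d"
    unfolding gauss_def by (rule P.P.prob_space_axioms)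
  define m where "m i = (\<integral>u. F i u \<partial>std_normal)" for i
  define Z where "Z g = (\<Sum>i=1..d. F i (g i) - m i)" for g
  have [measurable]: "Z \<in> borel_measurable (gauss d)" unfolding Z_def gauss_def by measurable
  have "emeasure (gauss d) {g \<in> space (gauss d). t \<le> Z g}
      \<le> exp (- l * t) * (\<integral>\<^sup>+g. ennreal (exp (l * Z g)) * indicator (space (gauss d)) g \<partial>gauss d)"
    by (intro Chernoff_ineq_nn_integral_ge l) auto
  also have "(\<integral>\<^sup>+g. ennreal (exp (l * Z g)) * indicator (space (gauss d)) g \<partial>gauss d)
      = (\<integral>\<^sup>+g. (\<Prod>i\<in>{1..d}. ennreal (exp (l * (F i (g i) - m i)))) \<partial>gauss d)"
    by (intro nn_integral_cong) (simp add: Z_def sum_distrib_left exp_sum prod_ennreal)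
  also have "\<dots> = (\<Prod>i\<in>{1..d}. \<integral>\<^sup>+u. exp (l * (F i u - m i)) \<partial>std_normal)"
    unfolding gauss_def by (rule P.product_nn_integral_prod) auto
  also have "exp (- l * t) * \<dots> \<le> exp (- l * t) * (\<Prod>i\<in>{1..d}. ennreal (exp (45 * l\<^sup>2)))"
    using centered_mgf_std_normal_linear_growth_le[OF _ F] l unfolding m_def
    by (intro mult_left_mono prod_mono_ennreal) auto
  also have "\<dots> = exp (- l * t + 45 * l\<^sup>2 * real d)"
    by (simp add: ennreal_power mult.commute exp_diff exp_minus field_simps flip: ennreal_mult exp_of_nat_mult)
  finally show ?thesis by (simp add: Z_def m_def emeasure_eq_measure)
qed

lemma gauss_sum_deviation_le:
  fixes F :: "nat \<Rightarrow> real \<Rightarrow> real"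
  assumes [measurable]: "\<And>i. F i \<in> borel_measurable borel"
    and F: "\<And>i u. \<bar>F i u\<bar> \<le> 2 + 3/2 * \<bar>u\<bar>" and l: "0 < l" "l \<le> 1/20"
  shows "measure (gauss d)
      {g \<in> space (gauss d). (\<Sum>i=1..d. F i (g i)) - (\<integral>g. (\<Sum>i=1..d. F i (g i)) \<partial>gauss d) \<le> t}
    \<ge> 1 - exp (- l * t + 45 * l\<^sup>2 * real d)"
proof -
  interpret prob_space "gauss d"
    unfolding gauss_def using prob_space_std_normal by (intro prob_space_PiM) auto
  define Z where "Z g = (\<Sum>i=1..d. F i (g i) - (\<integral>u. F i u \<partial>std_normal))" for g
  have [measurable]: "Z \<in> borel_measurable (gauss d)" unfolding Z_def gauss_def by measurable
  have iF: "integrable std_normal (F i)" for i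
    by (rule integrable_std_normal_linear_growth[OF _ F]) simp
  have event: "{g \<in> space (gauss d). (\<Sum>i=1..d. F i (g i)) - (\<integral>g. (\<Sum>i=1..d. F i (g i)) \<partial>gauss d) \<le> t}
      = {g \<in> space (gauss d). Z g \<le> t}"
    using gauss_component[OF _ iF] by (simp add: Z_def sum_subtractf)
  have "1 = measure (gauss d) ({g \<in> space (gauss d). Z g \<le> t} \<union> {g \<in> space (gauss d). t \<le> Z g})"
  proof -
    have "{g \<in> space (gauss d). Z g \<le> t} \<union> {g \<in> space (gauss d). t \<le> Z g} = space (gauss d)" by auto
    thus ?thesis by (simp add: prob_space)
  qed
  also have "\<dots> \<le> measure (gauss d) {g \<in> space (gauss d). Z g \<le> t} + measure (gauss d) {g \<in> space (gauss d). t \<le> Z g}"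
    by (intro measure_Un_le) auto
  finally show ?thesis
    unfolding event using gauss_sum_upper_tail_le[where F = F and d = d and t = t, OF _ F l] by (simp add: Z_def)
qed

lemma chernoff_parameter_sqrt_d_ln_d:
  fixes d :: real
  assumes d: "d \<ge> 8000"
  defines "s \<equiv> sqrt (d * ln d)"
  shows "0 < s / (3 * d)" "s / (3 * d) \<le> 1/20"
    "exp (- (s / (3 * d)) * (30 * s) + 45 * (s / (3 * d))\<^sup>2 * d) = d powr (-5)"
proof -
  have d1: "d > 1" using d by simp
  have s2: "s\<^sup>2 = d * ln d" unfolding s_def using d1 by simp
  show "0 < s / (3 * d)" unfolding s_def using d1 by simp
  have "ln d = 2 * ln (sqrt d)" using d1 by (simp add: ln_sqrt)
  also have "\<dots> \<le> 2 * sqrt d" using ln_less_self[of "sqrt d"] d1 by (simp add: less_imp_le)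
  finally have ln_le: "ln d \<le> 2 * sqrt d" .
  have "89 \<le> sqrt (8000::real)" by (rule real_le_rsqrt) simp
  hence sqrt_d: "89 \<le> sqrt d" using d by (meson order.trans real_sqrt_le_iff)
  have "400 * ln d \<le> 800 * sqrt d" using ln_le by simp
  also have "\<dots> \<le> 9 * (89 * sqrt d)" using d1 by simp
  also have "\<dots> \<le> 9 * (sqrt d * sqrt d)" using sqrt_d d1 by (intro mult_left_mono mult_right_mono) auto
  finally have "400 * ln d \<le> 9 * d" using d1 by simp
  hence "s\<^sup>2 \<le> (3 * d / 20)\<^sup>2" unfolding s2 using d1 by (simp add: power2_eq_square)
  hence "s \<le> 3 * d / 20" by (rule power2_le_imp_le) (use d1 in simp)
  thus "s / (3 * d) \<le> 1/20" using d1 by (simp add: divide_le_eq)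
  have "- (s / (3 * d)) * (30 * s) + 45 * (s / (3 * d))\<^sup>2 * d = - 5 * (s\<^sup>2 / d)"
    using d1 by (simp add: field_simps power2_eq_square)
  also have "\<dots> = - 5 * ln d" unfolding s2 using d1 by simp
  finally show "exp (- (s / (3 * d)) * (30 * s) + 45 * (s / (3 * d))\<^sup>2 * d) = d powr (-5)"
    using d1 by (simp add: powr_def)
qed

subsection \<open>The coordinate terms \<open>S\<^sub>i\<^sup>x\<close>\<close>

definition cos_trapezoid_defect :: "real \<Rightarrow> real \<Rightarrow> real" where
  "cos_trapezoid_defect a u =
     cos (a + sqrt 2 * u) - cos a + sqrt 2 / 2 * u * (sin a + sin (a + sqrt 2 * u))"

lemma borel_measurable_cos_trapezoid_defect [measurable]:
  "cos_trapezoid_defect a \<in> borel_measurable borel"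
  unfolding cos_trapezoid_defect_def by (intro borel_measurable_continuous_onI continuous_intros)

lemma abs_cos_trapezoid_defect_le: "\<bar>cos_trapezoid_defect a u\<bar> \<le> 2 + 3/2 * \<bar>u\<bar>"
proof -
  have "sqrt 2 \<le> sqrt ((3/2::real)\<^sup>2)" by (subst real_sqrt_le_iff) (simp add: power2_eq_square)
  hence sqrt2: "sqrt 2 \<le> (3/2::real)" by simp
  have "\<bar>sin a + sin (a + sqrt 2 * u)\<bar> \<le> 2"
    using abs_sin_le_one[of a] abs_sin_le_one[of "a + sqrt 2 * u"] by linarith
  hence "\<bar>sqrt 2 / 2 * u * (sin a + sin (a + sqrt 2 * u))\<bar> \<le> sqrt 2 / 2 * \<bar>u\<bar> * 2"
    by (simp add: abs_mult mult_left_mono)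
  also have "\<dots> = sqrt 2 * \<bar>u\<bar>" by simp
  also have "\<dots> \<le> 3/2 * \<bar>u\<bar>" using sqrt2 by (intro mult_right_mono) auto
  finally show ?thesis
    using abs_cos_le_one[of a] abs_cos_le_one[of "a + sqrt 2 * u"]
    unfolding cos_trapezoid_defect_def by linarith
qed

lemma S_coord_1: "S_coord \<kappa> h 1 x g = 0"
proof -
  have "deriv (f_coord \<kappa> h 1) c = c" for c
  proof (rule DERIV_imp_deriv)
    show "(f_coord \<kappa> h 1 has_real_derivative c) (at c)"
      unfolding f_coord_def by (auto intro!: derivative_eq_intros)
  qed
  thus ?thesis unfolding S_coord_def Let_def by (simp add: f_coord_def power2_eq_square algebra_simps)
qed

lemma S_coord_eq_cos_trapezoid_defect:
  assumes i: "i \<noteq> 1" and h: "h > 0"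
  shows "S_coord \<kappa> h i x g = \<kappa> * h / 3 * cos_trapezoid_defect (x i / sqrt h) (g i)"
proof -
  define r where "r = sqrt h"
  define a where "a = x i / r"
  have r: "r > 0" and h_eq: "h = r\<^sup>2" using h by (simp_all add: r_def)
  have f: "f_coord \<kappa> h i = (\<lambda>c. \<kappa> / 3 * c\<^sup>2 - \<kappa> * r\<^sup>2 / 3 * cos (c / r))"
    using i r by (simp add: f_coord_def h_eq fun_eq_iff)
  have f': "deriv (f_coord \<kappa> h i) c = 2 * \<kappa> / 3 * c + \<kappa> * r / 3 * sin (c / r)" for c
    unfolding f using r by (intro DERIV_imp_deriv) (auto intro!: derivative_eq_intros simp: field_simps power2_eq_square)
  have xi: "x i = a * r" and xg: "x_g h x g i = (a + sqrt 2 * g i) * r"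
    using r by (simp_all add: a_def x_g_def h_eq real_sqrt_mult algebra_simps)
  have cancel: "y * r / r = y" for y using r by simp
  have "S_coord \<kappa> h i x g = \<kappa> * r\<^sup>2 / 3 * cos_trapezoid_defect a (g i)"
    unfolding S_coord_def Let_def f' xg xi unfolding f cancel cos_trapezoid_defect_def
    by (simp add: power2_eq_square algebra_simps)
  thus ?thesis unfolding a_def r_def using h by simp
qed

lemma sum_S_coord_deviation_le:
  fixes \<kappa> h :: real and d :: nat and x :: "nat \<Rightarrow> real"
  assumes \<kappa>: "\<kappa> \<ge> 3" and h: "h > 0" and d: "8000 \<le> d"
  shows "measure (gauss d)
       {g \<in> space (gauss d).
          (\<Sum>i=1..d. S_coord \<kappa> h i x g) - (\<integral>g'. (\<Sum>i=1..d. S_coord \<kappa> h i x g') \<partial>gauss d)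
          \<le> 10 * h * \<kappa> * sqrt (real d * ln (real d))}
     \<ge> 1 - real d powr (-5)"
proof -
  define c where "c = \<kappa> * h / 3"
  define F where "F i = (if i = 1 then (\<lambda>_. 0) else cos_trapezoid_defect (x i / sqrt h))" for i
  define s where "s = sqrt (real d * ln (real d))"
  have c: "c > 0" using \<kappa> h by (simp add: c_def)
  have F_meas: "F i \<in> borel_measurable borel" for i by (simp add: F_def)
  have F: "\<bar>F i u\<bar> \<le> 2 + 3/2 * \<bar>u\<bar>" for i u
    using abs_cos_trapezoid_defect_le by (simp add: F_def)
  have sum_S: "(\<Sum>i=1..d. S_coord \<kappa> h i x g) = c * (\<Sum>i=1..d. F i (g i))" for g
    unfolding sum_distrib_left
    using S_coord_1 S_coord_eq_cos_trapezoid_defect[OF _ h]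
    by (intro sum.cong) (auto simp: F_def c_def)
  have scale: "10 * h * \<kappa> * s = c * (30 * s)" by (simp add: c_def)
  have cancel: "c * A - c * B \<le> c * (30 * s) \<longleftrightarrow> A - B \<le> 30 * s" for A B
    using c by (simp flip: right_diff_distrib)
  have "8000 \<le> real d" using d by simp
  note \<lambda> = chernoff_parameter_sqrt_d_ln_d[OF this, folded s_def]
  show ?thesis
    using gauss_sum_deviation_le[where F = F and d = d and t = "30 * s", OF F_meas F \<lambda>(1,2)] \<lambda>(3)
    unfolding s_def[symmetric] by (simp only: sum_S integral_mult_right_zero scale cancel)
qed

theorem lemma8:
  "\<exists>d0::nat. \<forall>\<kappa>::real. \<forall>h::real. \<forall>d::nat. \<forall>x::nat \<Rightarrow> real.
     \<kappa> \<ge> 3 \<longrightarrow> h > 0 \<longrightarrow> d \<ge> d0 \<longrightarrow>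
     measure (gauss d)
       {g \<in> space (gauss d).
          (\<Sum>i=1..d. S_coord \<kappa> h i x g)
            - (\<integral>g'. (\<Sum>i=1..d. S_coord \<kappa> h i x g') \<partial>gauss d)
          \<le> 10 * h * \<kappa> * sqrt (real d * ln (real d))}
     \<ge> 1 - real d powr (-5)"
  using sum_S_coord_deviation_le by (intro exI[of _ 8000] allI impI)

end
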